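(* Let $\Gamma \rightrightarrows H$ be a VB-groupoid over $G \rightrightarrows M$ with core $C$, and let $\Gamma^* \rightrightarrows C^*$ be its dual VB-groupoid. Let $gr(m_\Gamma)=\{(m_\Gamma(u,v),u,v): u,v \text{ composable}\}\subseteq \Gamma^3$, $gr(m_{\Gamma^*})\subseteq(\Gamma^* )^3$ and $gr(m_{\Gamma\oplus\Gamma^*})\subseteq(\Gamma\oplus\Gamma^* )^3$ be the graphs of the multiplications (subbundles over $gr(m_G)\subseteq G^3$), and let $ann(gr(m_\Gamma))\subseteq(\Gamma^* )^3$ denote the annihilator of $gr(m_\Gamma)$ with respect to the componentwise pairing $\langle(\alpha,\beta,\gamma),(u,v,w)\rangle=\langle\alpha,u\rangle+\langle\beta,v\rangle+\langle\gamma,w\rangle$. Define $\varphi:(\Gamma^* )^3\to(\Gamma^* )^3$, $(\alpha,\beta,\gamma)\mapsto(\alpha,-\beta,-\gamma)$, and $\Phi:(\Gamma\oplus\Gamma^* )^3\to\Gamma^3\oplus(\Gamma^* )^3$, $(u\oplus\alpha,v\oplus\beta,w\oplus\gamma)\mapsto(u,v,w)\oplus(\alpha,-\beta,-\gamma)$. Then: (a) $\varphi(gr(m_{\Gamma^*}))=ann(gr(m_\Gamma))$; (b) $\Phi(gr(m_{\Gamma\oplus\Gamma^*}))=gr(m_\Gamma)\oplus ann(gr(m_\Gamma))$.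
   Context: A VB-groupoid consists of Lie groupoids $\Gamma \rightrightarrows H$, $G\rightrightarrows M$ and vector bundles $\Gamma\to G$, $H\to M$ such that all groupoid structure maps of $\Gamma$ are vector bundle maps covering those of $G$. Its core is the vector bundle $C\to M$ consisting of elements of $\Gamma$ over units $\epsilon_G(m)$ with source $0_m$. The dual $\Gamma^*\to G$ is a VB-groupoid $\Gamma^*\rightrightarrows C^*$ over $G\rightrightarrows M$ whose multiplication is characterized by $\langle m_{\Gamma^*}(\alpha,\beta), m_\Gamma(u,v)\rangle=\langle\alpha,u\rangle+\langle\beta,v\rangle$ for composable pairs over the same composable pair of $G$. The direct sum $\Gamma\oplus\Gamma^*\rightrightarrows H\oplus C^*$ is the direct-sum VB-groupoid over $G\rightrightarrows M$. *)

theory Defs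
  imports Main "HOL-Analysis.Analysis"
begin

text \<open>Algebraic (fiberwise) model of a VB-groupoid.  Smoothness is not modelled;
the statement is a pointwise linear-algebra statement.  Arrows of the base groupoid
are all elements of type 'g, objects all elements of type 'm.  The product g h is
defined iff src g = tgt h.  The fiber of Gamma over g is a finite-dimensional
subspace fib g of a real vector space 'v; an element of Gamma is a pair (g, x) with
x in fib g.  Likewise H has fibers hfib m in 'w.\<close>

record ('g, 'm) groupoid =
  gsrc  :: "'g \<Rightarrow> 'm"
  gtgt  :: "'g \<Rightarrow> 'm"
  gmult :: "'g \<Rightarrow> 'g \<Rightarrow> 'g"
  gunit :: "'m \<Rightarrow> 'g"
  ginv  :: "'g \<Rightarrow> 'g"

record ('g, 'm, 'v, 'w) vbdata =
  fib   :: "'g \<Rightarrow> 'v set"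
  hfib  :: "'m \<Rightarrow> 'w set"
  vsrc  :: "'g \<Rightarrow> 'v \<Rightarrow> 'w"
  vtgt  :: "'g \<Rightarrow> 'v \<Rightarrow> 'w"
  vmult :: "'g \<Rightarrow> 'g \<Rightarrow> 'v \<Rightarrow> 'v \<Rightarrow> 'v"
  vunit :: "'m \<Rightarrow> 'w \<Rightarrow> 'v"
  vinv  :: "'g \<Rightarrow> 'v \<Rightarrow> 'v"

definition lin_on :: "'a::real_vector set \<Rightarrow> ('a \<Rightarrow> 'b::real_vector) \<Rightarrow> bool" where
  "lin_on S f \<longleftrightarrow> (\<forall>x\<in>S. \<forall>y\<in>S. f (x + y) = f x + f y) \<and> (\<forall>a. \<forall>x\<in>S. f (a *\<^sub>R x) = a *\<^sub>R f x)"

definition fin_dim_subspace :: "'a::real_vector set \<Rightarrow> bool" where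
  "fin_dim_subspace S \<longleftrightarrow> subspace S \<and> (\<exists>B. finite B \<and> span B = S)"

definition is_groupoid :: "('g, 'm) groupoid \<Rightarrow> bool" where
  "is_groupoid G \<longleftrightarrow>
    (\<forall>g h. gsrc G g = gtgt G h \<longrightarrow>
        gsrc G (gmult G g h) = gsrc G h \<and> gtgt G (gmult G g h) = gtgt G g) \<and>
    (\<forall>g h k. gsrc G g = gtgt G h \<longrightarrow> gsrc G h = gtgt G k \<longrightarrow>
        gmult G (gmult G g h) k = gmult G g (gmult G h k)) \<and>
    (\<forall>m. gsrc G (gunit G m) = m \<and> gtgt G (gunit G m) = m) \<and>
    (\<forall>g. gmult G (gunit G (gtgt G g)) g = g \<and> gmult G g (gunit G (gsrc G g)) = g) \<and>
    (\<forall>g. gsrc G (ginv G g) = gtgt G g \<and> gtgt G (ginv G g) = gsrc G g \<and>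
         gmult G (ginv G g) g = gunit G (gsrc G g) \<and>
         gmult G g (ginv G g) = gunit G (gtgt G g))"

definition vcomp :: "('g, 'm) groupoid \<Rightarrow> ('g, 'm, 'v::real_vector, 'w::real_vector) vbdata
    \<Rightarrow> 'g \<Rightarrow> 'g \<Rightarrow> 'v \<Rightarrow> 'v \<Rightarrow> bool" where
  "vcomp G V g h x y \<longleftrightarrow> gsrc G g = gtgt G h \<and> x \<in> fib V g \<and> y \<in> fib V h \<and>
     vsrc V g x = vtgt V h y"

definition is_VB_groupoid :: "('g, 'm) groupoid \<Rightarrow> ('g, 'm, 'v::real_vector, 'w::real_vector) vbdata \<Rightarrow> bool" where
  "is_VB_groupoid G V \<longleftrightarrow> is_groupoid G \<and>
    \<comment> \<open>vector bundles Gamma -> G and H -> M (fiberwise)\<close>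
    (\<forall>g. fin_dim_subspace (fib V g)) \<and> (\<forall>m. fin_dim_subspace (hfib V m)) \<and>
    \<comment> \<open>structure maps are fiberwise linear maps covering those of G\<close>
    (\<forall>g. vsrc V g ` fib V g \<subseteq> hfib V (gsrc G g) \<and> lin_on (fib V g) (vsrc V g)) \<and>
    (\<forall>g. vtgt V g ` fib V g \<subseteq> hfib V (gtgt G g) \<and> lin_on (fib V g) (vtgt V g)) \<and>
    (\<forall>m. vunit V m ` hfib V m \<subseteq> fib V (gunit G m) \<and> lin_on (hfib V m) (vunit V m)) \<and>
    (\<forall>g. vinv V g ` fib V g \<subseteq> fib V (ginv G g) \<and> lin_on (fib V g) (vinv V g)) \<and>
    (\<forall>g h x y. vcomp G V g h x y \<longrightarrow> vmult V g h x y \<in> fib V (gmult G g h)) \<and>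
    (\<forall>g h x y x' y'. vcomp G V g h x y \<longrightarrow> vcomp G V g h x' y' \<longrightarrow>
        vmult V g h (x + x') (y + y') = vmult V g h x y + vmult V g h x' y') \<and>
    (\<forall>g h x y a. vcomp G V g h x y \<longrightarrow>
        vmult V g h (a *\<^sub>R x) (a *\<^sub>R y) = a *\<^sub>R vmult V g h x y) \<and>
    \<comment> \<open>the source map Gamma -> H is fiberwise surjective (Gamma -> G xM H onto)\<close>
    (\<forall>g. vsrc V g ` fib V g = hfib V (gsrc G g)) \<and>
    \<comment> \<open>groupoid axioms of Gamma over H\<close>
    (\<forall>g h x y. vcomp G V g h x y \<longrightarrow>
        vsrc V (gmult G g h) (vmult V g h x y) = vsrc V h y \<and>
        vtgt V (gmult G g h) (vmult V g h x y) = vtgt V g x) \<and>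
    (\<forall>g h k x y z. vcomp G V g h x y \<longrightarrow> vcomp G V h k y z \<longrightarrow>
        vmult V (gmult G g h) k (vmult V g h x y) z = vmult V g (gmult G h k) x (vmult V h k y z)) \<and>
    (\<forall>m a. a \<in> hfib V m \<longrightarrow>
        vsrc V (gunit G m) (vunit V m a) = a \<and> vtgt V (gunit G m) (vunit V m a) = a) \<and>
    (\<forall>g x. x \<in> fib V g \<longrightarrow>
        vmult V (gunit G (gtgt G g)) g (vunit V (gtgt G g) (vtgt V g x)) x = x \<and>
        vmult V g (gunit G (gsrc G g)) x (vunit V (gsrc G g) (vsrc V g x)) = x) \<and>
    (\<forall>g x. x \<in> fib V g \<longrightarrow>
        vsrc V (ginv G g) (vinv V g x) = vtgt V g x \<and>
        vtgt V (ginv G g) (vinv V g x) = vsrc V g x \<and>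
        vmult V (ginv G g) g (vinv V g x) x = vunit V (gsrc G g) (vsrc V g x) \<and>
        vmult V g (ginv G g) x (vinv V g x) = vunit V (gtgt G g) (vtgt V g x))"

definition core :: "('g, 'm) groupoid \<Rightarrow> ('g, 'm, 'v::real_vector, 'w::real_vector) vbdata \<Rightarrow> 'm \<Rightarrow> 'v set" where
  "core G V m = {c \<in> fib V (gunit G m). vsrc V (gunit G m) c = 0}"

text \<open>Linear functionals on a subspace S, normalised to vanish outside S (so that
 the dual space of S is represented faithfully).\<close>
definition dualsp :: "'v::real_vector set \<Rightarrow> ('v \<Rightarrow> real) set" where
  "dualsp S = {f. lin_on S f \<and> (\<forall>x. x \<notin> S \<longrightarrow> f x = 0)}"

text \<open>Dual VB-groupoid Gamma* over C*: fibers, source and target (forced by the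
 characterisation of the dual multiplication), and multiplication.  An element of
 Gamma* is a pair (g, alpha) with alpha in dfib g.\<close>
definition dfib :: "('g, 'm, 'v::real_vector, 'w::real_vector) vbdata \<Rightarrow> 'g \<Rightarrow> ('v \<Rightarrow> real) set" where
  "dfib V g = dualsp (fib V g)"

definition dsrc :: "('g, 'm) groupoid \<Rightarrow> ('g, 'm, 'v::real_vector, 'w::real_vector) vbdata
    \<Rightarrow> 'g \<Rightarrow> ('v \<Rightarrow> real) \<Rightarrow> ('v \<Rightarrow> real)" where
  "dsrc G V g \<alpha> = (\<lambda>c. if c \<in> core G V (gsrc G g)
      then - \<alpha> (vmult V g (gunit G (gsrc G g)) 0 (vinv V (gunit G (gsrc G g)) c)) else 0)"

definition dtgt :: "('g, 'm) groupoid \<Rightarrow> ('g, 'm, 'v::real_vector, 'w::real_vector) vbdata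
    \<Rightarrow> 'g \<Rightarrow> ('v \<Rightarrow> real) \<Rightarrow> ('v \<Rightarrow> real)" where
  "dtgt G V h \<beta> = (\<lambda>c. if c \<in> core G V (gtgt G h)
      then \<beta> (vmult V (gunit G (gtgt G h)) h c 0) else 0)"

definition dcomp :: "('g, 'm) groupoid \<Rightarrow> ('g, 'm, 'v::real_vector, 'w::real_vector) vbdata
    \<Rightarrow> 'g \<Rightarrow> 'g \<Rightarrow> ('v \<Rightarrow> real) \<Rightarrow> ('v \<Rightarrow> real) \<Rightarrow> bool" where
  "dcomp G V g h \<alpha> \<beta> \<longleftrightarrow> gsrc G g = gtgt G h \<and> \<alpha> \<in> dfib V g \<and> \<beta> \<in> dfib V h \<and>
     dsrc G V g \<alpha> = dtgt G V h \<beta>"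

definition dmult :: "('g, 'm) groupoid \<Rightarrow> ('g, 'm, 'v::real_vector, 'w::real_vector) vbdata
    \<Rightarrow> 'g \<Rightarrow> 'g \<Rightarrow> ('v \<Rightarrow> real) \<Rightarrow> ('v \<Rightarrow> real) \<Rightarrow> ('v \<Rightarrow> real)" where
  "dmult G V g h \<alpha> \<beta> = (THE \<gamma>. \<gamma> \<in> dfib V (gmult G g h) \<and>
      (\<forall>x y. vcomp G V g h x y \<longrightarrow> \<gamma> (vmult V g h x y) = \<alpha> x + \<beta> y))"

definition gr_G :: "('g, 'm) groupoid \<Rightarrow> ('g \<times> 'g \<times> 'g) set" where
  "gr_G G = {(gmult G g h, g, h) | g h. gsrc G g = gtgt G h}"

definition gr_V :: "('g, 'm) groupoid \<Rightarrow> ('g, 'm, 'v::real_vector, 'w::real_vector) vbdata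
    \<Rightarrow> (('g \<times> 'v) \<times> ('g \<times> 'v) \<times> ('g \<times> 'v)) set" where
  "gr_V G V = {((gmult G g h, vmult V g h x y), (g, x), (h, y)) | g h x y. vcomp G V g h x y}"

definition gr_D :: "('g, 'm) groupoid \<Rightarrow> ('g, 'm, 'v::real_vector, 'w::real_vector) vbdata
    \<Rightarrow> (('g \<times> ('v \<Rightarrow> real)) \<times> ('g \<times> ('v \<Rightarrow> real)) \<times> ('g \<times> ('v \<Rightarrow> real))) set" where
  "gr_D G V = {((gmult G g h, dmult G V g h \<alpha> \<beta>), (g, \<alpha>), (h, \<beta>)) | g h \<alpha> \<beta>. dcomp G V g h \<alpha> \<beta>}"

definition gr_S :: "('g, 'm) groupoid \<Rightarrow> ('g, 'm, 'v::real_vector, 'w::real_vector) vbdata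
    \<Rightarrow> (('g \<times> 'v \<times> ('v \<Rightarrow> real)) \<times> ('g \<times> 'v \<times> ('v \<Rightarrow> real)) \<times> ('g \<times> 'v \<times> ('v \<Rightarrow> real))) set" where
  "gr_S G V = {((gmult G g h, (vmult V g h x y, dmult G V g h \<alpha> \<beta>)), (g, (x, \<alpha>)), (h, (y, \<beta>)))
      | g h x y \<alpha> \<beta>. vcomp G V g h x y \<and> dcomp G V g h \<alpha> \<beta>}"

definition ann :: "('g, 'm, 'v::real_vector, 'w::real_vector) vbdata \<Rightarrow> ('g \<times> 'g \<times> 'g) set
    \<Rightarrow> (('g \<times> 'v) \<times> ('g \<times> 'v) \<times> ('g \<times> 'v)) set
    \<Rightarrow> (('g \<times> ('v \<Rightarrow> real)) \<times> ('g \<times> ('v \<Rightarrow> real)) \<times> ('g \<times> ('v \<Rightarrow> real))) set" where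
  "ann V B S = {((k, \<gamma>), (g, \<alpha>), (h, \<beta>)) | k g h \<gamma> \<alpha> \<beta>. (k, g, h) \<in> B \<and>
      \<gamma> \<in> dfib V k \<and> \<alpha> \<in> dfib V g \<and> \<beta> \<in> dfib V h \<and>
      (\<forall>w u v. ((k, w), (g, u), (h, v)) \<in> S \<longrightarrow> \<gamma> w + \<alpha> u + \<beta> v = 0)}"

definition phi :: "('g \<times> ('v \<Rightarrow> real)) \<times> ('g \<times> ('v \<Rightarrow> real)) \<times> ('g \<times> ('v \<Rightarrow> real))
    \<Rightarrow> ('g \<times> ('v \<Rightarrow> real)) \<times> ('g \<times> ('v \<Rightarrow> real)) \<times> ('g \<times> ('v \<Rightarrow> real))" where
  "phi t = (case t of ((k, \<gamma>), (g, \<alpha>), (h, \<beta>)) \<Rightarrow> ((k, \<gamma>), (g, - \<alpha>), (h, - \<beta>)))"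

definition Phi :: "('g \<times> 'v \<times> ('v \<Rightarrow> real)) \<times> ('g \<times> 'v \<times> ('v \<Rightarrow> real)) \<times> ('g \<times> 'v \<times> ('v \<Rightarrow> real))
    \<Rightarrow> (('g \<times> 'v) \<times> ('g \<times> 'v) \<times> ('g \<times> 'v)) \<times>
       (('g \<times> ('v \<Rightarrow> real)) \<times> ('g \<times> ('v \<Rightarrow> real)) \<times> ('g \<times> ('v \<Rightarrow> real)))" where
  "Phi t = (case t of ((k, (w, \<gamma>)), (g, (u, \<alpha>)), (h, (v, \<beta>))) \<Rightarrow>
      (((k, w), (g, u), (h, v)), ((k, \<gamma>), (g, - \<alpha>), (h, - \<beta>))))"

definition vb_dsum :: "(('g \<times> 'v) \<times> ('g \<times> 'v) \<times> ('g \<times> 'v)) set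
    \<Rightarrow> (('g \<times> 'a) \<times> ('g \<times> 'a) \<times> ('g \<times> 'a)) set
    \<Rightarrow> ((('g \<times> 'v) \<times> ('g \<times> 'v) \<times> ('g \<times> 'v)) \<times> (('g \<times> 'a) \<times> ('g \<times> 'a) \<times> ('g \<times> 'a))) set" where
  "vb_dsum A B = {(((k, w), (g, u), (h, v)), ((k, \<gamma>), (g, \<alpha>), (h, \<beta>))) | k g h w u v \<gamma> \<alpha> \<beta>.
      ((k, w), (g, u), (h, v)) \<in> A \<and> ((k, \<gamma>), (g, \<alpha>), (h, \<beta>)) \<in> B}"

end

theory Submission
  imports Defs
begin

text \<open>Over a composable pair (g, h), multiplication is a linear surjection from the space of
composable pairs onto the fibre of \<Gamma> over gh, and its kernel consists of the pairs
(0_g c^-1, c 0_h) with c in the core over s(g). Hence a functional \<alpha> \<oplus> \<beta> on composable pairs factors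
uniquely as \<gamma> \<circ> m exactly when it vanishes on that kernel, and this vanishing is the
compatibility condition s(\<alpha>) = t(\<beta>) of the dual \<Gamma>*. As \<gamma> \<circ> m = \<alpha> \<oplus> \<beta> says that (\<gamma>, -\<alpha>, -\<beta>) annihilates
the graph of m, this gives (a), and (b) is (a) paired with the graph of m.\<close>

lemma lin_on_add: "lin_on S f \<Longrightarrow> x \<in> S \<Longrightarrow> y \<in> S \<Longrightarrow> f (x + y) = f x + f y"
  unfolding lin_on_def by blast

lemma lin_on_scale: "lin_on S f \<Longrightarrow> x \<in> S \<Longrightarrow> f (a *\<^sub>R x) = a *\<^sub>R f x"
  unfolding lin_on_def by blast

lemma lin_on_zero: "lin_on S f \<Longrightarrow> subspace S \<Longrightarrow> f 0 = 0"
  using lin_on_scale[of S f 0 0] subspace_0 by fastforce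

lemma lin_on_diff:
  assumes "lin_on S f" "subspace S" "x \<in> S" "y \<in> S"
  shows "f (x - y) = f x - f y"
proof -
  have "(-1) *\<^sub>R y \<in> S" using assms(2,4) by (rule subspace_scale)
  then have "f (x + (-1) *\<^sub>R y) = f x + (-1) *\<^sub>R f y"
    using assms lin_on_add lin_on_scale by metis
  then show ?thesis by simp
qed

lemma uminus_dualsp: "\<alpha> \<in> dualsp S \<Longrightarrow> - \<alpha> \<in> dualsp S"
  unfolding dualsp_def lin_on_def by (auto simp: algebra_simps)

lemma ex1_dualsp_factor:
  fixes m :: "'a::real_vector \<Rightarrow> 'b::real_vector"
  assumes K: "subspace K" and m: "lin_on K m" and f: "lin_on K f"
    and ker: "\<And>x. x \<in> K \<Longrightarrow> m x = 0 \<Longrightarrow> f x = 0"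
  shows "\<exists>!\<gamma>. \<gamma> \<in> dualsp (m ` K) \<and> (\<forall>x\<in>K. \<gamma> (m x) = f x)"
proof -
  have f_eq: "f x = f x'" if "x \<in> K" "x' \<in> K" "m x = m x'" for x x'
  proof -
    have "x - x' \<in> K" using K that by (simp add: subspace_diff)
    moreover have "m (x - x') = 0" using lin_on_diff[OF m K] that by simp
    ultimately have "f (x - x') = 0" by (rule ker)
    then show ?thesis using lin_on_diff[OF f K] that by simp
  qed
  define \<gamma> where "\<gamma> w = (if w \<in> m ` K then f (inv_into K m w) else 0)" for w
  have \<gamma>_m: "\<gamma> (m x) = f x" if "x \<in> K" for x
    using that f_eq[of "inv_into K m (m x)" x] by (simp add: \<gamma>_def inv_into_into f_inv_into_f)
  have "lin_on (m ` K) \<gamma>"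
    unfolding lin_on_def
  proof (intro conjI ballI allI)
    fix w1 w2 assume "w1 \<in> m ` K" "w2 \<in> m ` K"
    then obtain x1 x2 where x: "x1 \<in> K" "x2 \<in> K" and "w1 = m x1" "w2 = m x2" by blast
    then show "\<gamma> (w1 + w2) = \<gamma> w1 + \<gamma> w2"
      using \<gamma>_m[of "x1 + x2"] \<gamma>_m x lin_on_add[OF m x] lin_on_add[OF f x]
      by (simp add: K subspace_add)
  next
    fix a w assume "w \<in> m ` K"
    then obtain x where x: "x \<in> K" and "w = m x" by blast
    then show "\<gamma> (a *\<^sub>R w) = a *\<^sub>R \<gamma> w"
      using \<gamma>_m[of "a *\<^sub>R x"] \<gamma>_m lin_on_scale[OF m x] lin_on_scale[OF f x]
      by (simp add: K subspace_scale)
  qed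
  then have "\<gamma> \<in> dualsp (m ` K)" unfolding dualsp_def by (simp add: \<gamma>_def)
  moreover have "\<gamma>' = \<gamma>" if "\<gamma>' \<in> dualsp (m ` K)" and "\<forall>x\<in>K. \<gamma>' (m x) = f x" for \<gamma>'
  proof
    fix w show "\<gamma>' w = \<gamma> w"
      using that \<gamma>_m unfolding dualsp_def by (cases "w \<in> m ` K") (auto simp: \<gamma>_def)
  qed
  ultimately show ?thesis using \<gamma>_m by blast
qed

locale VB_groupoid =
  fixes G :: "('g, 'm) groupoid"
    and V :: "('g, 'm, 'v::real_vector, 'w::real_vector) vbdata"
  assumes VB_groupoid: "is_VB_groupoid G V"
begin

lemma groupoid: "is_groupoid G"
  using VB_groupoid unfolding is_VB_groupoid_def by blast

lemma gsrc_gmult: "gsrc G g = gtgt G h \<Longrightarrow> gsrc G (gmult G g h) = gsrc G h"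
  using groupoid unfolding is_groupoid_def by blast

lemma gmult_assoc:
  "gsrc G g = gtgt G h \<Longrightarrow> gsrc G h = gtgt G k \<Longrightarrow> gmult G (gmult G g h) k = gmult G g (gmult G h k)"
  using groupoid unfolding is_groupoid_def by blast

lemma gsrc_gunit [simp]: "gsrc G (gunit G m) = m"
  and gtgt_gunit [simp]: "gtgt G (gunit G m) = m"
  and gmult_gunit_left [simp]: "gmult G (gunit G (gtgt G g)) g = g"
  and gmult_gunit_right [simp]: "gmult G g (gunit G (gsrc G g)) = g"
  and gsrc_ginv [simp]: "gsrc G (ginv G g) = gtgt G g"
  and gtgt_ginv [simp]: "gtgt G (ginv G g) = gsrc G g"
  and gmult_ginv_left [simp]: "gmult G (ginv G g) g = gunit G (gsrc G g)"
  and gmult_ginv_right [simp]: "gmult G g (ginv G g) = gunit G (gtgt G g)"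
  using groupoid unfolding is_groupoid_def by blast+

lemma gmult_gunit_gunit [simp]: "gmult G (gunit G m) (gunit G m) = gunit G m"
  using gmult_gunit_left[of "gunit G m"] by simp

lemma ginv_gunit [simp]: "ginv G (gunit G m) = gunit G m"
  using gmult_gunit_left[of "ginv G (gunit G m)"] gmult_ginv_right[of "gunit G m"] by simp

lemma gmult_gmult_ginv: "gsrc G g = gtgt G h \<Longrightarrow> gmult G (gmult G g h) (ginv G h) = g"
  using gmult_assoc[of g h "ginv G h"] gmult_gunit_right[of g] by simp

lemma subspace_fib: "subspace (fib V g)"
  and subspace_hfib: "subspace (hfib V m)"
  using VB_groupoid unfolding is_VB_groupoid_def fin_dim_subspace_def by meson+

lemma zero_fib [simp]: "0 \<in> fib V g"
  using subspace_fib by (rule subspace_0)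

lemma vsrc_in: "x \<in> fib V g \<Longrightarrow> vsrc V g x \<in> hfib V (gsrc G g)"
  and lin_on_vsrc: "lin_on (fib V g) (vsrc V g)"
  and lin_on_vtgt: "lin_on (fib V g) (vtgt V g)"
  and lin_on_vunit: "lin_on (hfib V m) (vunit V m)"
  and vinv_in: "x \<in> fib V g \<Longrightarrow> vinv V g x \<in> fib V (ginv G g)"
  and vmult_in: "vcomp G V g h x y \<Longrightarrow> vmult V g h x y \<in> fib V (gmult G g h)"
  and vmult_add: "vcomp G V g h x y \<Longrightarrow> vcomp G V g h x' y' \<Longrightarrow>
        vmult V g h (x + x') (y + y') = vmult V g h x y + vmult V g h x' y'"
  and vmult_scale: "vcomp G V g h x y \<Longrightarrow> vmult V g h (a *\<^sub>R x) (a *\<^sub>R y) = a *\<^sub>R vmult V g h x y"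
  and vsrc_image: "vsrc V g ` fib V g = hfib V (gsrc G g)"
  and vsrc_vmult: "vcomp G V g h x y \<Longrightarrow> vsrc V (gmult G g h) (vmult V g h x y) = vsrc V h y"
  and vtgt_vmult: "vcomp G V g h x y \<Longrightarrow> vtgt V (gmult G g h) (vmult V g h x y) = vtgt V g x"
  and vmult_assoc: "vcomp G V g h x y \<Longrightarrow> vcomp G V h k y z \<Longrightarrow>
        vmult V (gmult G g h) k (vmult V g h x y) z = vmult V g (gmult G h k) x (vmult V h k y z)"
  and vmult_vunit_right: "x \<in> fib V g \<Longrightarrow>
        vmult V g (gunit G (gsrc G g)) x (vunit V (gsrc G g) (vsrc V g x)) = x"
  and vsrc_vinv: "x \<in> fib V g \<Longrightarrow> vsrc V (ginv G g) (vinv V g x) = vtgt V g x"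
  and vtgt_vinv: "x \<in> fib V g \<Longrightarrow> vtgt V (ginv G g) (vinv V g x) = vsrc V g x"
  and vmult_vinv_left: "x \<in> fib V g \<Longrightarrow>
        vmult V (ginv G g) g (vinv V g x) x = vunit V (gsrc G g) (vsrc V g x)"
  and vmult_vinv_right: "x \<in> fib V g \<Longrightarrow>
        vmult V g (ginv G g) x (vinv V g x) = vunit V (gtgt G g) (vtgt V g x)"
  using VB_groupoid unfolding is_VB_groupoid_def by (meson image_subset_iff)+

lemma vsrc_zero [simp]: "vsrc V g 0 = 0"
  using lin_on_zero[OF lin_on_vsrc subspace_fib] .

lemma vtgt_zero [simp]: "vtgt V g 0 = 0"
  using lin_on_zero[OF lin_on_vtgt subspace_fib] .

lemma vunit_zero [simp]: "vunit V m 0 = 0"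
  using lin_on_zero[OF lin_on_vunit subspace_hfib] .

lemma vcomp_zero: "gsrc G g = gtgt G h \<Longrightarrow> vcomp G V g h 0 0"
  unfolding vcomp_def by simp

lemma vmult_zero: "gsrc G g = gtgt G h \<Longrightarrow> vmult V g h 0 0 = 0"
  using vmult_scale[OF vcomp_zero, of g h 0] by simp

definition zero_mult_inv_core :: "'g \<Rightarrow> 'v \<Rightarrow> 'v" where
  "zero_mult_inv_core g c = vmult V g (gunit G (gsrc G g)) 0 (vinv V (gunit G (gsrc G g)) c)"

definition core_mult_zero :: "'g \<Rightarrow> 'v \<Rightarrow> 'v" where
  "core_mult_zero h c = vmult V (gunit G (gtgt G h)) h c 0"

lemma
  assumes gh: "gsrc G g = gtgt G h" and c: "c \<in> core G V (gsrc G g)"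
  shows vcomp_core_pair: "vcomp G V g h (zero_mult_inv_core g c) (core_mult_zero h c)"
    and vmult_core_pair: "vmult V g h (zero_mult_inv_core g c) (core_mult_zero h c) = 0"
proof -
  define u where "u = gunit G (gsrc G g)"
  define c' where "c' = vinv V u c"
  have cF: "c \<in> fib V u" and cs: "vsrc V u c = 0" using c unfolding core_def u_def by auto
  have c'F: "c' \<in> fib V u" using vinv_in[OF cF] unfolding c'_def u_def by simp
  have c's: "vsrc V u c' = vtgt V u c" using vsrc_vinv[OF cF] unfolding c'_def u_def by simp
  have c't: "vtgt V u c' = 0" using vtgt_vinv[OF cF] cs unfolding c'_def u_def by simp
  have gu: "gmult G g u = g" and uh: "gmult G u h = h" and uu: "gmult G u u = u"
    using gmult_gunit_right[of g] gmult_gunit_left[of h] unfolding u_def gh by simp_all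
  have left: "zero_mult_inv_core g c = vmult V g u 0 c'"
    unfolding zero_mult_inv_core_def u_def c'_def ..
  have right: "core_mult_zero h c = vmult V u h c 0"
    unfolding core_mult_zero_def u_def gh ..
  have comp_left: "vcomp G V g u 0 c'" using c'F c't by (simp add: vcomp_def u_def)
  have comp_right: "vcomp G V u h c 0" using cF cs gh by (simp add: vcomp_def u_def)
  have comp_inv: "vcomp G V u u c' c" using c'F cF c's by (simp add: vcomp_def u_def)
  have comp_inv_right: "vcomp G V u h c' (core_mult_zero h c)"
    using c'F c's vmult_in[OF comp_right] vtgt_vmult[OF comp_right] uh gh
    unfolding right by (simp add: vcomp_def u_def)
  show "vcomp G V g h (zero_mult_inv_core g c) (core_mult_zero h c)"
    using vmult_in[OF comp_left] vmult_in[OF comp_right] vsrc_vmult[OF comp_left]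
      vtgt_vmult[OF comp_right] gh gu uh c's
    unfolding left right vcomp_def by simp
  have "vmult V u u c' c = 0"
    using vmult_vinv_left[OF cF] cs unfolding c'_def u_def by simp
  then have "vmult V u h c' (core_mult_zero h c) = 0"
    using vmult_assoc[OF comp_inv comp_right] uu uh vmult_zero[of u h] gh
    unfolding right by (simp add: u_def)
  then show "vmult V g h (zero_mult_inv_core g c) (core_mult_zero h c) = 0"
    using vmult_assoc[OF comp_left comp_inv_right] gu uh vmult_zero[OF gh] unfolding left by simp
qed

lemma vmult_right_cancel:
  assumes xy: "vcomp G V g h x y" and x'y: "vcomp G V g h x' y"
    and eq: "vmult V g h x y = vmult V g h x' y"
  shows "x = x'"
proof -
  have gh: "gsrc G g = gtgt G h" and yF: "y \<in> fib V h" using xy unfolding vcomp_def by auto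
  define y' where "y' = vinv V h y"
  have comp_inv: "vcomp G V h (ginv G h) y y'"
    using yF vinv_in[OF yF] vtgt_vinv[OF yF] by (simp add: vcomp_def y'_def)
  have undo: "vmult V (gmult G g h) (ginv G h) (vmult V g h z y) y' = z" if zy: "vcomp G V g h z y" for z
  proof -
    have zF: "z \<in> fib V g" and zs: "vsrc V g z = vtgt V h y" using zy unfolding vcomp_def by auto
    have "vmult V (gmult G g h) (ginv G h) (vmult V g h z y) y'
        = vmult V g (gmult G h (ginv G h)) z (vmult V h (ginv G h) y y')"
      by (rule vmult_assoc[OF zy comp_inv])
    also have "\<dots> = vmult V g (gunit G (gsrc G g)) z (vunit V (gsrc G g) (vsrc V g z))"
      using vmult_vinv_right[OF yF] gh zs by (simp add: y'_def)
    also have "\<dots> = z" by (rule vmult_vunit_right[OF zF])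
    finally show ?thesis .
  qed
  show ?thesis using undo[OF xy] undo[OF x'y] eq by metis
qed

lemma vmult_eq_zeroE:
  assumes xy: "vcomp G V g h x y" and zero: "vmult V g h x y = 0"
  obtains c where "c \<in> core G V (gsrc G g)"
    and "x = zero_mult_inv_core g c" and "y = core_mult_zero h c"
proof -
  have gh: "gsrc G g = gtgt G h" and yF: "y \<in> fib V h" using xy unfolding vcomp_def by auto
  have ys: "vsrc V h y = 0" using vsrc_vmult[OF xy] zero by simp
  have comp_inv: "vcomp G V h (ginv G h) y 0" using yF ys by (simp add: vcomp_def)
  define c where "c = vmult V h (ginv G h) y 0"
  have h_hinv: "gmult G h (ginv G h) = gunit G (gsrc G g)" using gh by simp
  have c_core: "c \<in> core G V (gsrc G g)"
    using vmult_in[OF comp_inv] vsrc_vmult[OF comp_inv] h_hinv unfolding core_def c_def by simp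
  have "vmult V (gmult G h (ginv G h)) h c 0 = vmult V h (gmult G (ginv G h) h) y 0"
    using vmult_assoc[OF comp_inv vcomp_zero, of h] vmult_zero[of "ginv G h" h] unfolding c_def by simp
  also have "\<dots> = y" using vmult_vunit_right[OF yF] ys by simp
  finally have y_eq: "y = core_mult_zero h c" unfolding core_mult_zero_def using gh by simp
  have "zero_mult_inv_core g c = x"
    using vmult_right_cancel[OF _ xy] vcomp_core_pair[OF gh c_core] vmult_core_pair[OF gh c_core]
      zero y_eq by simp
  with c_core y_eq that show thesis by simp
qed

lemma vmult_image:
  assumes gh: "gsrc G g = gtgt G h"
  shows "(\<lambda>(x, y). vmult V g h x y) ` {(x, y). vcomp G V g h x y} = fib V (gmult G g h)"
proof
  show "(\<lambda>(x, y). vmult V g h x y) ` {(x, y). vcomp G V g h x y} \<subseteq> fib V (gmult G g h)"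
    using vmult_in by auto
next
  show "fib V (gmult G g h) \<subseteq> (\<lambda>(x, y). vmult V g h x y) ` {(x, y). vcomp G V g h x y}"
  proof
    fix w assume wF: "w \<in> fib V (gmult G g h)"
    have "vsrc V (gmult G g h) w \<in> hfib V (gsrc G h)" using vsrc_in[OF wF] gsrc_gmult[OF gh] by simp
    then obtain y where yF: "y \<in> fib V h" and ys: "vsrc V h y = vsrc V (gmult G g h) w"
      using vsrc_image[of h] by force
    define y' where "y' = vinv V h y"
    define x where "x = vmult V (gmult G g h) (ginv G h) w y'"
    have comp_w: "vcomp G V (gmult G g h) (ginv G h) w y'"
      using gsrc_gmult[OF gh] wF vinv_in[OF yF] vtgt_vinv[OF yF] ys by (simp add: vcomp_def y'_def)
    have comp_inv: "vcomp G V (ginv G h) h y' y"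
      using vinv_in[OF yF] yF vsrc_vinv[OF yF] by (simp add: vcomp_def y'_def)
    have gh_hinv: "gmult G (gmult G g h) (ginv G h) = g" by (rule gmult_gmult_ginv[OF gh])
    have xy: "vcomp G V g h x y"
      using gh vmult_in[OF comp_w] yF vsrc_vmult[OF comp_w] vsrc_vinv[OF yF] gh_hinv
      by (simp add: vcomp_def x_def y'_def)
    have "vmult V g h x y = vmult V (gmult G g h) (gmult G (ginv G h) h) w (vmult V (ginv G h) h y' y)"
      using vmult_assoc[OF comp_w comp_inv] gh_hinv unfolding x_def by simp
    also have "\<dots> = vmult V (gmult G g h) (gunit G (gsrc G (gmult G g h))) w
        (vunit V (gsrc G (gmult G g h)) (vsrc V (gmult G g h) w))"
      using vmult_vinv_left[OF yF] gsrc_gmult[OF gh] ys by (simp add: y'_def)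
    also have "\<dots> = w" by (rule vmult_vunit_right[OF wF])
    finally show "w \<in> (\<lambda>(x, y). vmult V g h x y) ` {(x, y). vcomp G V g h x y}"
      using xy by force
  qed
qed

lemma subspace_vcomp: "gsrc G g = gtgt G h \<Longrightarrow> subspace {(x, y). vcomp G V g h x y}"
  unfolding subspace_def vcomp_def
  using subspace_fib lin_on_add[OF lin_on_vsrc] lin_on_add[OF lin_on_vtgt]
    lin_on_scale[OF lin_on_vsrc] lin_on_scale[OF lin_on_vtgt]
  by (auto simp: zero_prod_def subspace_add subspace_scale)

lemma lin_on_vmult: "lin_on {(x, y). vcomp G V g h x y} (\<lambda>(x, y). vmult V g h x y)"
  unfolding lin_on_def using vmult_add vmult_scale by auto

lemma lin_on_pair_functional:
  assumes "lin_on (fib V g) \<alpha>" and "lin_on (fib V h) \<beta>"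
  shows "lin_on {(x, y). vcomp G V g h x y} (\<lambda>(x, y). \<alpha> x + \<beta> y)"
  using assms unfolding lin_on_def vcomp_def by (auto simp: algebra_simps)

lemma dsrc_core: "c \<in> core G V (gsrc G g) \<Longrightarrow> dsrc G V g \<alpha> c = - \<alpha> (zero_mult_inv_core g c)"
  by (simp add: dsrc_def zero_mult_inv_core_def)

lemma dtgt_core: "c \<in> core G V (gtgt G h) \<Longrightarrow> dtgt G V h \<beta> c = \<beta> (core_mult_zero h c)"
  by (simp add: dtgt_def core_mult_zero_def)

lemma dsrc_eq_dtgt_iff:
  assumes gh: "gsrc G g = gtgt G h"
  shows "dsrc G V g \<alpha> = dtgt G V h \<beta> \<longleftrightarrow>
    (\<forall>x y. vcomp G V g h x y \<longrightarrow> vmult V g h x y = 0 \<longrightarrow> \<alpha> x + \<beta> y = 0)"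
proof
  assume eq: "dsrc G V g \<alpha> = dtgt G V h \<beta>"
  show "\<forall>x y. vcomp G V g h x y \<longrightarrow> vmult V g h x y = 0 \<longrightarrow> \<alpha> x + \<beta> y = 0"
  proof (intro allI impI)
    fix x y assume "vcomp G V g h x y" and "vmult V g h x y = 0"
    then obtain c where c: "c \<in> core G V (gsrc G g)"
      and "x = zero_mult_inv_core g c" and "y = core_mult_zero h c"
      by (rule vmult_eq_zeroE)
    then show "\<alpha> x + \<beta> y = 0"
      using fun_cong[OF eq, of c] dsrc_core[OF c] dtgt_core[of c h] gh by simp
  qed
next
  assume ker: "\<forall>x y. vcomp G V g h x y \<longrightarrow> vmult V g h x y = 0 \<longrightarrow> \<alpha> x + \<beta> y = 0"
  show "dsrc G V g \<alpha> = dtgt G V h \<beta>"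
  proof
    fix c show "dsrc G V g \<alpha> c = dtgt G V h \<beta> c"
    proof (cases "c \<in> core G V (gsrc G g)")
      case True
      then have "\<alpha> (zero_mult_inv_core g c) + \<beta> (core_mult_zero h c) = 0"
        using ker vcomp_core_pair[OF gh] vmult_core_pair[OF gh] by blast
      then show ?thesis using dsrc_core[OF True] dtgt_core[of c h] True gh by simp
    next
      case False
      then show ?thesis using gh by (simp add: dsrc_def dtgt_def)
    qed
  qed
qed

lemma ex1_dmult:
  assumes "dcomp G V g h \<alpha> \<beta>"
  shows "\<exists>!\<gamma>. \<gamma> \<in> dfib V (gmult G g h) \<and>
    (\<forall>x y. vcomp G V g h x y \<longrightarrow> \<gamma> (vmult V g h x y) = \<alpha> x + \<beta> y)"
proof -
  have gh: "gsrc G g = gtgt G h" and "\<alpha> \<in> dfib V g" "\<beta> \<in> dfib V h"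
    and ker: "\<forall>x y. vcomp G V g h x y \<longrightarrow> vmult V g h x y = 0 \<longrightarrow> \<alpha> x + \<beta> y = 0"
    using assms dsrc_eq_dtgt_iff unfolding dcomp_def by auto
  then have "lin_on {(x, y). vcomp G V g h x y} (\<lambda>(x, y). \<alpha> x + \<beta> y)"
    by (intro lin_on_pair_functional) (simp_all add: dfib_def dualsp_def)
  from ex1_dualsp_factor[OF subspace_vcomp[OF gh] lin_on_vmult this] ker
  show ?thesis unfolding vmult_image[OF gh] dfib_def by (simp add: split_paired_all)
qed

lemma dmult_eq_iff:
  assumes "dcomp G V g h \<alpha> \<beta>"
  shows "dmult G V g h \<alpha> \<beta> = \<gamma> \<longleftrightarrow> \<gamma> \<in> dfib V (gmult G g h) \<and>
    (\<forall>x y. vcomp G V g h x y \<longrightarrow> \<gamma> (vmult V g h x y) = \<alpha> x + \<beta> y)"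
  using the1_equality[OF ex1_dmult[OF assms]] theI'[OF ex1_dmult[OF assms]]
  unfolding dmult_def by blast

lemma
  assumes "dcomp G V g h \<alpha> \<beta>"
  shows dmult_in_dfib: "dmult G V g h \<alpha> \<beta> \<in> dfib V (gmult G g h)"
    and dmult_vmult: "vcomp G V g h x y \<Longrightarrow> dmult G V g h \<alpha> \<beta> (vmult V g h x y) = \<alpha> x + \<beta> y"
  using dmult_eq_iff[OF assms, of "dmult G V g h \<alpha> \<beta>"] by simp_all

lemma mem_ann_gr_V_iff:
  "((k, \<gamma>), (g, \<alpha>), (h, \<beta>)) \<in> ann V (gr_G G) (gr_V G V) \<longleftrightarrow>
   gsrc G g = gtgt G h \<and> k = gmult G g h \<and> \<gamma> \<in> dfib V k \<and> \<alpha> \<in> dfib V g \<and> \<beta> \<in> dfib V h \<and>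
   (\<forall>x y. vcomp G V g h x y \<longrightarrow> \<gamma> (vmult V g h x y) + \<alpha> x + \<beta> y = 0)"
  unfolding ann_def gr_G_def gr_V_def by blast

lemma phi_gr_D: "phi ` gr_D G V = ann V (gr_G G) (gr_V G V)"
proof (intro equalityI subsetI)
  fix t assume "t \<in> phi ` gr_D G V"
  then obtain g h \<alpha> \<beta> where d: "dcomp G V g h \<alpha> \<beta>"
    and t: "t = ((gmult G g h, dmult G V g h \<alpha> \<beta>), (g, - \<alpha>), (h, - \<beta>))"
    unfolding gr_D_def phi_def by auto
  show "t \<in> ann V (gr_G G) (gr_V G V)"
    using dmult_in_dfib[OF d] dmult_vmult[OF d] d uminus_dualsp
    unfolding t mem_ann_gr_V_iff dcomp_def dfib_def by auto
next
  fix t assume t_ann: "t \<in> ann V (gr_G G) (gr_V G V)"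
  then obtain k g h \<gamma> \<alpha> \<beta> where t: "t = ((k, \<gamma>), (g, \<alpha>), (h, \<beta>))"
    unfolding ann_def by blast
  have gh: "gsrc G g = gtgt G h" and k: "k = gmult G g h"
    and \<gamma>: "\<gamma> \<in> dfib V (gmult G g h)" and \<alpha>: "\<alpha> \<in> dfib V g" and \<beta>: "\<beta> \<in> dfib V h"
    and an: "\<forall>x y. vcomp G V g h x y \<longrightarrow> \<gamma> (vmult V g h x y) + \<alpha> x + \<beta> y = 0"
    using t_ann unfolding t mem_ann_gr_V_iff by auto
  have "\<gamma> 0 = 0" using \<gamma> lin_on_zero subspace_fib unfolding dfib_def dualsp_def by blast
  then have "dcomp G V g h (- \<alpha>) (- \<beta>)"
    using gh an \<alpha> \<beta> uminus_dualsp dsrc_eq_dtgt_iff[OF gh]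
    unfolding dcomp_def dfib_def by (auto simp: add_eq_0_iff)
  moreover have "\<gamma> (vmult V g h x y) = (- \<alpha>) x + (- \<beta>) y" if "vcomp G V g h x y" for x y
    using an that by fastforce
  ultimately have "dmult G V g h (- \<alpha>) (- \<beta>) = \<gamma>"
    using \<gamma> dmult_eq_iff by blast
  with \<open>dcomp G V g h (- \<alpha>) (- \<beta>)\<close> show "t \<in> phi ` gr_D G V"
    unfolding t k gr_D_def phi_def image_iff by force
qed

end

lemma Phi_gr_S: "Phi ` gr_S G V = vb_dsum (gr_V G V) (phi ` gr_D G V)"
proof (intro equalityI subsetI)
  fix t assume "t \<in> Phi ` gr_S G V"
  then obtain g h x y \<alpha> \<beta> where "vcomp G V g h x y" and d: "dcomp G V g h \<alpha> \<beta>"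
    and t: "t = (((gmult G g h, vmult V g h x y), (g, x), (h, y)),
      ((gmult G g h, dmult G V g h \<alpha> \<beta>), (g, - \<alpha>), (h, - \<beta>)))"
    unfolding gr_S_def Phi_def by auto
  moreover have "((gmult G g h, dmult G V g h \<alpha> \<beta>), (g, - \<alpha>), (h, - \<beta>)) \<in> phi ` gr_D G V"
    using d unfolding gr_D_def phi_def by (auto simp: image_iff)
  ultimately show "t \<in> vb_dsum (gr_V G V) (phi ` gr_D G V)"
    unfolding gr_V_def vb_dsum_def by blast
next
  fix t assume "t \<in> vb_dsum (gr_V G V) (phi ` gr_D G V)"
  then obtain g h x y \<alpha> \<beta> where "vcomp G V g h x y" and "dcomp G V g h \<alpha> \<beta>"
    and "t = (((gmult G g h, vmult V g h x y), (g, x), (h, y)),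
      ((gmult G g h, dmult G V g h \<alpha> \<beta>), (g, - \<alpha>), (h, - \<beta>)))"
    unfolding gr_V_def gr_D_def vb_dsum_def phi_def by auto
  then have "t = Phi ((gmult G g h, vmult V g h x y, dmult G V g h \<alpha> \<beta>), (g, x, \<alpha>), (h, y, \<beta>))"
    and "((gmult G g h, vmult V g h x y, dmult G V g h \<alpha> \<beta>), (g, x, \<alpha>), (h, y, \<beta>)) \<in> gr_S G V"
    unfolding Phi_def gr_S_def by auto
  then show "t \<in> Phi ` gr_S G V" by blast
qed

theorem proposition3p2:
  fixes G :: "('g, 'm) groupoid"
    and V :: "('g, 'm, 'v::real_vector, 'w::real_vector) vbdata"
  assumes "is_VB_groupoid G V"
  shows "phi ` gr_D G V = ann V (gr_G G) (gr_V G V) \<and>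
         Phi ` gr_S G V = vb_dsum (gr_V G V) (ann V (gr_G G) (gr_V G V))"
proof -
  interpret VB_groupoid G V by (rule VB_groupoid.intro) (rule assms)
  show ?thesis using phi_gr_D Phi_gr_S[of G V] by simp
qed

end
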